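(* Let $D$ be a Dedekind domain with quotient field $K$, let $I$ be a finite non-empty index set, let $f_i\in D[x]$ be irreducible in $K[x]$ for each $i\in I$, and let $c$ be a non-unit of $D$ with $\mathsf{d}\bigl(\prod_{i\in I}f_i\bigr)=cD$. Put $f=\frac{1}{c}\prod_{i\in I}f_i\in\operatorname{Int}(D)$, and let $\mathcal{P}$ be the finite set of maximal ideals of $D$ containing $c$. Suppose that for each $P\in\mathcal{P}$, $\Lambda_P\subseteq I$ is a subset such that $f_i$ is indispensable for $P$ (among the polynomials $f_i$, $i\in I$) for every $i\in\Lambda_P$, and let $\Lambda=\bigcup_{P\in\mathcal{P}}\Lambda_P$. If $\bigcap_{P\in\mathcal{P}}\Lambda_P\neq\emptyset$, then all essentially different factorizations of $f$ into irreducibles in $\operatorname{Int}(D)$ are given by \[\frac{\prod_{i\in\Lambda\cup J_1}f_i}{c}\cdot\prod_{j\in J_2}f_j\] (each $f_j$, $j\in J_2$, counted as an individual factor), where $I=\Lambda\uplus J_1\uplus J_2$ and $J_1$ is minimal (with respect to inclusion) such that $\mathsf{d}\bigl(\prod_{i\in\Lambda\cup J_1}f_i\bigr)=cD$. That is, each such expression is a factorization of $f$ into irreducibles of $\operatorname{Int}(D)$, and every factorization of $f$ into irreducibles of $\operatorname{Int}(D)$ is essentially the same as one of them.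
   Context: $\operatorname{Int}(D)=\{h\in K[x]\mid h(D)\subseteq D\}$. For $g\in D[x]$, the fixed divisor $\mathsf{d}(g)$ is the ideal of $D$ generated by $\{g(a)\mid a\in D\}$. For a maximal ideal $P$, $\mathsf{v}_P$ is the $P$-adic valuation. Given polynomials $f_i\in D[x]$, $i\in I$, and a maximal ideal $P$, $f_k$ is called indispensable for $P$ (among the $f_i$, $i\in I$) if there exists $z\in D$ with $\mathsf{v}_P(f_k(z))>0$ and $\mathsf{v}_P(f_i(z))=0$ for all $i\neq k$. A factorization is a product of irreducible elements (non-zero non-units not expressible as a product of two non-units); two factorizations are essentially the same if they have the same number of factors and, after reindexing, corresponding factors differ by unit factors of $\operatorname{Int}(D)$. *)

theory Defs
  imports "HOL-Computational_Algebra.Polynomial_Factorial" "HOL-Library.Extended_Nat" "HOL-Combinatorics.Permutations"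
begin

definition is_ideal :: "'a::comm_ring_1 set \<Rightarrow> bool" where
  "is_ideal J \<longleftrightarrow> 0 \<in> J \<and> (\<forall>x\<in>J. \<forall>y\<in>J. x + y \<in> J) \<and> (\<forall>r. \<forall>x\<in>J. r * x \<in> J)"

definition ideal_span :: "'a::comm_ring_1 set \<Rightarrow> 'a set" where
  "ideal_span S = \<Inter>{J. is_ideal J \<and> S \<subseteq> J}"

definition principal_ideal :: "'a::comm_ring_1 \<Rightarrow> 'a set" where
  "principal_ideal c = range (\<lambda>x. c * x)"

definition ideal_mult :: "'a::comm_ring_1 set \<Rightarrow> 'a set \<Rightarrow> 'a set" where
  "ideal_mult J1 J2 = ideal_span {x * y | x y. x \<in> J1 \<and> y \<in> J2}"

primrec ideal_pow :: "'a::comm_ring_1 set \<Rightarrow> nat \<Rightarrow> 'a set" where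
  "ideal_pow P 0 = UNIV"
| "ideal_pow P (Suc n) = ideal_mult P (ideal_pow P n)"

definition prime_ideal :: "'a::comm_ring_1 set \<Rightarrow> bool" where
  "prime_ideal P \<longleftrightarrow> is_ideal P \<and> P \<noteq> UNIV \<and> (\<forall>a b. a * b \<in> P \<longrightarrow> a \<in> P \<or> b \<in> P)"

definition maximal_ideal :: "'a::comm_ring_1 set \<Rightarrow> bool" where
  "maximal_ideal P \<longleftrightarrow> is_ideal P \<and> P \<noteq> UNIV \<and>
     (\<forall>J. is_ideal J \<and> P \<subseteq> J \<longrightarrow> J = P \<or> J = UNIV)"

definition noetherian_domain :: "'a::idom itself \<Rightarrow> bool" where
  "noetherian_domain _ \<longleftrightarrow> (\<forall>J::'a set. is_ideal J \<longrightarrow> (\<exists>F. finite F \<and> J = ideal_span F))"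

definition integrally_closed :: "'a::idom itself \<Rightarrow> bool" where
  "integrally_closed _ \<longleftrightarrow> (\<forall>x::'a fract. (\<exists>p::'a poly. lead_coeff p = 1 \<and> poly (map_poly to_fract p) x = 0)
      \<longrightarrow> x \<in> range to_fract)"

definition dim_le_one :: "'a::idom itself \<Rightarrow> bool" where
  "dim_le_one _ \<longleftrightarrow> (\<forall>P::'a set. prime_ideal P \<and> P \<noteq> {0} \<longrightarrow> maximal_ideal P)"

definition dedekind_domain :: "'a::idom itself \<Rightarrow> bool" where
  "dedekind_domain T \<longleftrightarrow> noetherian_domain T \<and> integrally_closed T \<and> dim_le_one T"

definition fixed_divisor :: "'a::idom poly \<Rightarrow> 'a set" where
  "fixed_divisor g = ideal_span (range (poly g))"

text \<open>P-adic valuation: largest n with a in P^n (infinity for a = 0).\<close>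
definition vP :: "'a::idom set \<Rightarrow> 'a \<Rightarrow> enat" where
  "vP P a = (SUP n\<in>{n. a \<in> ideal_pow P n}. enat n)"

definition indispensable :: "'a::idom set \<Rightarrow> ('i \<Rightarrow> 'a poly) \<Rightarrow> 'i set \<Rightarrow> 'i \<Rightarrow> bool" where
  "indispensable P f I k \<longleftrightarrow>
     (\<exists>z. vP P (poly (f k) z) > 0 \<and> (\<forall>i\<in>I. i \<noteq> k \<longrightarrow> vP P (poly (f i) z) = 0))"

definition IntD :: "'a::idom fract poly set" where
  "IntD = {h. \<forall>a. poly h (to_fract a) \<in> range to_fract}"

definition IntD_unit :: "'a::idom fract poly \<Rightarrow> bool" where
  "IntD_unit u \<longleftrightarrow> u \<in> IntD \<and> (\<exists>v\<in>IntD. u * v = 1)"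

definition IntD_irreducible :: "'a::idom fract poly \<Rightarrow> bool" where
  "IntD_irreducible h \<longleftrightarrow> h \<in> IntD \<and> h \<noteq> 0 \<and> \<not> IntD_unit h \<and>
     (\<forall>a\<in>IntD. \<forall>b\<in>IntD. h = a * b \<longrightarrow> IntD_unit a \<or> IntD_unit b)"

definition IntD_factorization :: "'a::idom fract poly \<Rightarrow> 'a fract poly list \<Rightarrow> bool" where
  "IntD_factorization h xs \<longleftrightarrow> (\<forall>x\<in>set xs. IntD_irreducible x) \<and> prod_list xs = h"

definition ess_same :: "'a::idom fract poly list \<Rightarrow> 'a fract poly list \<Rightarrow> bool" where
  "ess_same xs ys \<longleftrightarrow> length xs = length ys \<and>
     (\<exists>\<sigma>. \<sigma> permutes {..<length xs} \<and>
        (\<forall>k<length xs. \<exists>u. IntD_unit u \<and> xs ! k = u * ys ! (\<sigma> k)))"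


definition candidate_split :: "'a::idom \<Rightarrow> ('i \<Rightarrow> 'a poly) \<Rightarrow> 'i set \<Rightarrow> 'i set \<Rightarrow> 'i set \<Rightarrow> 'i set \<Rightarrow> 'i list \<Rightarrow> bool" where
  "candidate_split c f I Lambda J1 J2 js \<longleftrightarrow>
     Lambda \<union> J1 \<union> J2 = I \<and> Lambda \<inter> J1 = {} \<and> Lambda \<inter> J2 = {} \<and> J1 \<inter> J2 = {} \<and>
     fixed_divisor (\<Prod>i\<in>Lambda \<union> J1. f i) = principal_ideal c \<and>
     (\<forall>J'. J' \<subset> J1 \<longrightarrow> fixed_divisor (\<Prod>i\<in>Lambda \<union> J'. f i) \<noteq> principal_ideal c) \<and>
     distinct js \<and> set js = J2"

definition candidate_expr :: "'a::idom \<Rightarrow> ('i \<Rightarrow> 'a poly) \<Rightarrow> 'i set \<Rightarrow> 'i set \<Rightarrow> 'i list \<Rightarrow> 'a fract poly list" where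
  "candidate_expr c f Lambda J1 js =
     smult (inverse (to_fract c)) (map_poly to_fract (\<Prod>i\<in>Lambda \<union> J1. f i))
     # map (\<lambda>j. map_poly to_fract (f j)) js"

end

(*
  Fix an index i0 lying in Lambda_P for every maximal ideal P containing c. Indispensability
  yields two facts: if B is a subset of I avoiding i0, the fixed divisor of the product of the
  f_i over B is D, because every maximal ideal containing c misses one of its values; and if c
  divides all values of the product over A, then Lambda is contained in A.

  In K[x] the f_i are prime, so every factor of f in Int(D) is a constant times a subproduct.
  In a factorization of f, the factor whose subproduct contains f_i0 has a cofactor avoiding
  i0; the first fact puts the constant of that cofactor into D, and then the factor is the
  product over some A (containing Lambda, with fixed divisor cD) divided by c times a unit.
  Every other factor is a unit multiple of a subproduct avoiding i0, hence of a single f_j by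
  irreducibility, and irreducibility also makes A minimal. Conversely, minimality makes the
  first factor of each candidate irreducible, and f_j with j outside Lambda is irreducible in
  Int(D) since its fixed divisor is D.
*)
theory Submission
  imports Defs
begin

section \<open>Ideals\<close>

lemma is_ideal_ideal_span: "is_ideal (ideal_span S)"
  unfolding ideal_span_def is_ideal_def by auto

lemma ideal_span_superset: "S \<subseteq> ideal_span S"
  unfolding ideal_span_def by auto

lemma ideal_span_least: "is_ideal J \<Longrightarrow> S \<subseteq> J \<Longrightarrow> ideal_span S \<subseteq> J"
  unfolding ideal_span_def by auto

lemma ideal_add_closed: "is_ideal J \<Longrightarrow> x \<in> J \<Longrightarrow> y \<in> J \<Longrightarrow> x + y \<in> J"
  unfolding is_ideal_def by auto

lemma ideal_mult_closed: "is_ideal J \<Longrightarrow> x \<in> J \<Longrightarrow> r * x \<in> J"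
  unfolding is_ideal_def by auto

lemma ideal_eq_UNIV_if_one: "is_ideal J \<Longrightarrow> 1 \<in> J \<Longrightarrow> J = UNIV"
  using ideal_mult_closed[of J 1] by auto

lemma mem_principal_ideal_iff: "x \<in> principal_ideal d \<longleftrightarrow> d dvd x"
  unfolding principal_ideal_def by (auto simp: dvd_def)

lemma is_ideal_principal_ideal: "is_ideal (principal_ideal d)"
  unfolding is_ideal_def by (simp add: mem_principal_ideal_iff)

lemma principal_ideal_subset: "is_ideal J \<Longrightarrow> d \<in> J \<Longrightarrow> principal_ideal d \<subseteq> J"
  unfolding principal_ideal_def using ideal_mult_closed[of J d] by (auto simp: mult.commute)

lemma ideal_pow_one_superset: "P \<subseteq> ideal_pow P 1"
proof
  fix x assume "x \<in> P"
  then have "x * 1 \<in> {x * y |x y. x \<in> P \<and> y \<in> UNIV}" by blast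
  then show "x \<in> ideal_pow P 1"
    using ideal_span_superset by (fastforce simp: ideal_mult_def)
qed

lemma not_mem_if_vP_eq_0: "vP P a = 0 \<Longrightarrow> a \<notin> P"
proof
  assume "vP P a = 0" "a \<in> P"
  then have "enat 1 \<le> vP P a"
    unfolding vP_def using ideal_pow_one_superset by (intro SUP_upper2[of 1]) auto
  with \<open>vP P a = 0\<close> show False by (simp add: enat_0_iff)
qed

lemma maximal_ideal_is_ideal: "maximal_ideal P \<Longrightarrow> is_ideal P"
  unfolding maximal_ideal_def by auto

lemma one_notin_maximal_ideal: "maximal_ideal P \<Longrightarrow> 1 \<notin> P"
  unfolding maximal_ideal_def using ideal_eq_UNIV_if_one by blast

lemma is_ideal_add_multiples:
  assumes P: "is_ideal P" shows "is_ideal {p + a * r |p r. p \<in> P}"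
  unfolding is_ideal_def
proof (intro conjI ballI allI)
  have "0 + a * 0 \<in> {p + a * r |p r. p \<in> P}" using P unfolding is_ideal_def by blast
  then show "0 \<in> {p + a * r |p r. p \<in> P}" by simp
next
  fix x y assume "x \<in> {p + a * r |p r. p \<in> P}" "y \<in> {p + a * r |p r. p \<in> P}"
  then obtain p r p' r' where "x = p + a * r" "y = p' + a * r'" "p \<in> P" "p' \<in> P" by auto
  then show "x + y \<in> {p + a * r |p r. p \<in> P}"
    using ideal_add_closed[OF P, of p p']
    by (intro CollectI exI[of _ "p + p'"] exI[of _ "r + r'"]) (auto simp: algebra_simps)
next
  fix s x assume "x \<in> {p + a * r |p r. p \<in> P}"
  then obtain p r where "x = p + a * r" "p \<in> P" by auto
  then show "s * x \<in> {p + a * r |p r. p \<in> P}"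
    using ideal_mult_closed[OF P, of p s]
    by (intro CollectI exI[of _ "s * p"] exI[of _ "s * r"]) (auto simp: algebra_simps)
qed

lemma maximal_ideal_imp_prime_ideal:
  assumes P: "maximal_ideal P"
  shows "prime_ideal P"
  unfolding prime_ideal_def
proof (intro conjI allI impI)
  have PI: "is_ideal P" using P by (rule maximal_ideal_is_ideal)
  then show "is_ideal P" "P \<noteq> UNIV" using one_notin_maximal_ideal[OF P] by auto
  fix a b assume ab: "a * b \<in> P"
  have "b \<in> P" if a: "a \<notin> P"
  proof -
    let ?J = "{p + a * r |p r. p \<in> P}"
    have "0 + a * 1 \<in> ?J" using PI unfolding is_ideal_def
      by (intro CollectI exI[of _ "0 + a * 1"] exI[of _ 0] exI[of _ 1] conjI) auto
    then have "?J \<noteq> P" using a by (metis add_0 mult_1_right)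
    have "P \<subseteq> ?J" by (force intro: exI[of _ 0])
    then have "?J = P \<or> ?J = UNIV"
      using P is_ideal_add_multiples[OF PI, of a] unfolding maximal_ideal_def by blast
    with \<open>?J \<noteq> P\<close> have "?J = UNIV" by blast
    then obtain p r where pr: "1 = p + a * r" "p \<in> P" by blast
    then have "b = b * p + r * (a * b)" by (metis mult.commute mult.left_commute mult_1_left distrib_left)
    moreover have "b * p \<in> P" "r * (a * b) \<in> P"
      using ideal_mult_closed[OF PI pr(2), of b] ideal_mult_closed[OF PI ab, of r] by auto
    ultimately show "b \<in> P" using ideal_add_closed[OF PI] by metis
  qed
  then show "a \<in> P \<or> b \<in> P" by blast
qed

lemma prod_notin_maximal_ideal:
  assumes P: "maximal_ideal P" and "finite B" and "\<forall>i\<in>B. g i \<notin> P"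
  shows "prod g B \<notin> P"
  using assms(2,3)
proof (induction B rule: finite_induct)
  case empty
  then show ?case using one_notin_maximal_ideal[OF P] by simp
next
  case (insert x F)
  then have "g x \<notin> P" "prod g F \<notin> P" by auto
  with maximal_ideal_imp_prime_ideal[OF P] have "g x * prod g F \<notin> P"
    unfolding prime_ideal_def by blast
  with insert(1,2) show ?case by simp
qed

lemma is_ideal_Union_chain:
  assumes "C \<noteq> {}" and ideals: "\<forall>X\<in>C. is_ideal X" and chain: "\<forall>X\<in>C. \<forall>Y\<in>C. X \<subseteq> Y \<or> Y \<subseteq> X"
  shows "is_ideal (\<Union>C)"
  unfolding is_ideal_def
proof (intro conjI ballI allI)
  show "0 \<in> \<Union>C" using assms(1) ideals unfolding is_ideal_def by blast
next
  fix x y assume "x \<in> \<Union>C" "y \<in> \<Union>C"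
  then obtain X Y where "X \<in> C" "Y \<in> C" "x \<in> X" "y \<in> Y" by auto
  then obtain Z where "Z \<in> C" "x \<in> Z" "y \<in> Z" using chain by blast
  then show "x + y \<in> \<Union>C" using ideals ideal_add_closed by blast
next
  fix r x assume "x \<in> \<Union>C"
  then show "r * x \<in> \<Union>C" using ideals ideal_mult_closed by blast
qed

lemma maximal_ideal_superset:
  fixes J :: "'a::comm_ring_1 set"
  assumes J: "is_ideal J" and one: "1 \<notin> J"
  obtains P where "maximal_ideal P" "J \<subseteq> P"
proof -
  define A where "A = {K. is_ideal K \<and> J \<subseteq> K \<and> 1 \<notin> K}"
  have "\<exists>M\<in>A. \<forall>X\<in>A. M \<subseteq> X \<longrightarrow> X = M"
  proof (rule subset_Zorn_nonempty)
    show "A \<noteq> {}" using J one unfolding A_def by blast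
  next
    fix C assume C: "C \<noteq> {}" "subset.chain A C"
    then have ch: "C \<subseteq> A" "\<forall>X\<in>C. \<forall>Y\<in>C. X \<subseteq> Y \<or> Y \<subseteq> X"
      unfolding subset.chain_def by auto
    then have "is_ideal (\<Union>C)" using C(1) by (intro is_ideal_Union_chain) (auto simp: A_def)
    then show "\<Union>C \<in> A" using C ch unfolding A_def by blast
  qed
  then obtain M where M: "M \<in> A" "\<forall>X\<in>A. M \<subseteq> X \<longrightarrow> X = M" by blast
  have "maximal_ideal M"
    unfolding maximal_ideal_def
  proof (intro conjI allI impI)
    show "is_ideal M" "M \<noteq> UNIV" using M unfolding A_def by auto
  next
    fix K assume K: "is_ideal K \<and> M \<subseteq> K"
    show "K = M \<or> K = UNIV"
    proof (cases "1 \<in> K")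
      case True then show ?thesis using K ideal_eq_UNIV_if_one by blast
    next
      case False then have "K \<in> A" using K M unfolding A_def by blast
      then show ?thesis using M K by blast
    qed
  qed
  then show thesis using M that unfolding A_def by blast
qed

section \<open>Fixed divisors and integer-valued polynomials\<close>

lemma is_ideal_fixed_divisor: "is_ideal (fixed_divisor g)"
  unfolding fixed_divisor_def by (rule is_ideal_ideal_span)

lemma poly_in_fixed_divisor: "poly g a \<in> fixed_divisor g"
  unfolding fixed_divisor_def using ideal_span_superset by blast

lemma fixed_divisor_antimono:
  assumes "g dvd h" shows "fixed_divisor h \<subseteq> fixed_divisor g"
proof -
  obtain q where h: "h = g * q" using assms by (auto elim: dvdE)
  have "poly h a \<in> fixed_divisor g" for a
    using ideal_mult_closed[OF is_ideal_fixed_divisor poly_in_fixed_divisor, of "poly q a" g a]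
    by (simp add: h mult.commute)
  then show ?thesis
    unfolding fixed_divisor_def[of h] by (intro ideal_span_least[OF is_ideal_fixed_divisor]) blast
qed

lemma fixed_divisor_subset_principal_ideal_iff:
  "fixed_divisor g \<subseteq> principal_ideal d \<longleftrightarrow> (\<forall>z. d dvd poly g z)"
proof
  assume "fixed_divisor g \<subseteq> principal_ideal d"
  then show "\<forall>z. d dvd poly g z" using poly_in_fixed_divisor[of g] mem_principal_ideal_iff by blast
next
  assume "\<forall>z. d dvd poly g z"
  then show "fixed_divisor g \<subseteq> principal_ideal d"
    unfolding fixed_divisor_def
    by (intro ideal_span_least[OF is_ideal_principal_ideal]) (auto simp: mem_principal_ideal_iff)
qed

lemma poly_fract_poly: "poly (map_poly to_fract p) (to_fract a) = to_fract (poly p a)"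
  by (induction p) (simp_all add: map_poly_pCons)

lemma fract_poly_prod: "map_poly to_fract (prod g S) = (\<Prod>i\<in>S. map_poly to_fract (g i))"
  by (induction S rule: infinite_finite_induct) auto

lemma fract_poly_in_IntD: "map_poly to_fract p \<in> IntD"
  unfolding IntD_def by (simp add: poly_fract_poly)

lemma IntD_mult_closed: "a \<in> IntD \<Longrightarrow> b \<in> IntD \<Longrightarrow> a * b \<in> IntD"
  unfolding IntD_def by (auto simp: image_iff) (metis to_fract_mult)

lemma IntD_prod_closed: "(\<And>i. i \<in> S \<Longrightarrow> g i \<in> IntD) \<Longrightarrow> prod g S \<in> IntD"
  by (induction S rule: infinite_finite_induct)
    (auto simp: IntD_mult_closed fract_poly_in_IntD[of 1, simplified])

lemma smult_inverse_fract_poly_in_IntD_iff: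
  assumes "d \<noteq> 0"
  shows "smult (inverse (to_fract d)) (map_poly to_fract g) \<in> IntD \<longleftrightarrow> (\<forall>z. d dvd poly g z)"
proof -
  have "inverse (to_fract d) * to_fract x \<in> range to_fract \<longleftrightarrow> d dvd x" for x
  proof
    assume "inverse (to_fract d) * to_fract x \<in> range to_fract"
    then obtain y where "to_fract x = to_fract d * to_fract y" using assms by (auto simp: field_simps)
    then have "x = d * y" by (simp del: to_fract_mult add: to_fract_mult[symmetric])
    then show "d dvd x" by simp
  next
    assume "d dvd x"
    then obtain y where "x = d * y" by (auto elim: dvdE)
    then have "inverse (to_fract d) * to_fract x = to_fract y" using assms by (simp add: field_simps)
    then show "inverse (to_fract d) * to_fract x \<in> range to_fract" by (metis rangeI)
  qed
  then show ?thesis unfolding IntD_def by (simp add: poly_fract_poly)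
qed

lemma IntD_unit_const:
  assumes "e dvd 1" shows "IntD_unit [:to_fract e:]"
proof -
  obtain e' where e': "1 = e * e'" using assms by (auto elim: dvdE)
  then have "[:to_fract e:] * [:to_fract e':] = 1" by (simp flip: to_fract_mult add: one_pCons mult.commute)
  moreover have "[:to_fract a:] \<in> IntD" for a unfolding IntD_def by auto
  ultimately show ?thesis unfolding IntD_unit_def by blast
qed

lemma IntD_cofactor_in_prod_list:
  assumes "k < length xs" "\<forall>x\<in>set xs. x \<in> IntD"
  shows "\<exists>r\<in>IntD. r * xs ! k = prod_list xs"
proof
  show "(\<Prod>l\<in>{..<length xs} - {k}. xs ! l) \<in> IntD"
    using assms by (intro IntD_prod_closed) auto
  have "prod_list xs = (\<Prod>l\<in>{..<length xs}. xs ! l)"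
    by (simp add: prod.list_conv_set_nth atLeast0LessThan)
  also have "\<dots> = xs ! k * (\<Prod>l\<in>{..<length xs} - {k}. xs ! l)"
    using assms(1) by (simp add: prod.remove)
  finally show "(\<Prod>l\<in>{..<length xs} - {k}. xs ! l) * xs ! k = prod_list xs"
    by (simp add: mult.commute)
qed

lemma smult_inverse_mult_unit:
  assumes "e dvd 1"
  shows "\<exists>u. IntD_unit u \<and> smult (inverse (to_fract (c * e))) p = u * smult (inverse (to_fract c)) p"
proof -
  obtain e' where e': "1 = e * e'" using assms by (auto elim: dvdE)
  then have "inverse (to_fract e) = to_fract e'"
    by (intro inverse_unique) (simp flip: to_fract_mult)
  then have "smult (inverse (to_fract (c * e))) p = [:to_fract e':] * smult (inverse (to_fract c)) p"
    by (simp add: inverse_mult_distrib mult.commute)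
  moreover have "IntD_unit [:to_fract e':]" using e' by (intro IntD_unit_const) (metis dvd_triv_right)
  ultimately show ?thesis by blast
qed

lemma degree_IntD_unit: "IntD_unit u \<Longrightarrow> degree u = 0"
  unfolding IntD_unit_def by (metis dvd_triv_left is_unit_iff_degree mult_zero_left zero_neq_one)

text \<open>The elements \<open>x\<close> with \<open>\<beta> x \<in> D\<close> form an ideal containing all values of \<open>g\<close>,
  hence all of \<open>d(g)\<close>.\<close>
lemma scalar_in_D_if_smult_in_IntD:
  assumes "smult \<beta> (map_poly to_fract g) \<in> IntD" and "1 \<in> fixed_divisor g"
  shows "\<beta> \<in> range to_fract"
proof -
  define J where "J = {x. \<beta> * to_fract x \<in> range to_fract}"
  have "is_ideal J"
    unfolding is_ideal_def J_def
  proof (intro conjI ballI allI)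
    show "0 \<in> {x. \<beta> * to_fract x \<in> range to_fract}" by (simp add: image_iff)
  next
    fix x y assume "x \<in> {x. \<beta> * to_fract x \<in> range to_fract}" "y \<in> {x. \<beta> * to_fract x \<in> range to_fract}"
    then obtain u v where "\<beta> * to_fract x = to_fract u" "\<beta> * to_fract y = to_fract v" by auto
    then have "\<beta> * to_fract (x + y) = to_fract (u + v)" by (simp add: distrib_left)
    then show "x + y \<in> {x. \<beta> * to_fract x \<in> range to_fract}" by (metis mem_Collect_eq rangeI)
  next
    fix r x assume "x \<in> {x. \<beta> * to_fract x \<in> range to_fract}"
    then obtain u where "\<beta> * to_fract x = to_fract u" by auto
    then have "\<beta> * to_fract (r * x) = to_fract (r * u)" by (simp add: mult.left_commute)
    then show "r * x \<in> {x. \<beta> * to_fract x \<in> range to_fract}" by (metis mem_Collect_eq rangeI)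
  qed
  moreover have "range (poly g) \<subseteq> J"
    using assms(1) unfolding J_def IntD_def by (auto simp: poly_fract_poly)
  ultimately have "fixed_divisor g \<subseteq> J" unfolding fixed_divisor_def by (rule ideal_span_least)
  then show ?thesis using assms(2) unfolding J_def by auto
qed

section \<open>Products of prime polynomials over a field\<close>

lemma degree_prod_prime_elems_pos:
  fixes \<phi> :: "'i \<Rightarrow> 'k::field poly"
  assumes "finite S" "S \<noteq> {}" "\<forall>i\<in>S. prime_elem (\<phi> i)"
  shows "0 < degree (prod \<phi> S)"
proof -
  have "0 < degree (\<phi> i)" if "i \<in> S" for i
    using assms(3) that by (metis is_unit_iff_degree neq0_conv not_prime_elem_zero prime_elem_not_unit)
  then have "0 < (\<Sum>i\<in>S. degree (\<phi> i))"
    using assms(1,2) by (intro sum_pos) auto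
  then show ?thesis using assms(3) by (subst degree_prod_eq_sum_degree) auto
qed

lemma dvd_prod_prime_elems:
  fixes \<phi> :: "'i \<Rightarrow> 'k::field poly"
  assumes "finite S" "\<forall>i\<in>S. prime_elem (\<phi> i)" "a dvd prod \<phi> S"
  obtains A \<alpha> where "A \<subseteq> S" "\<alpha> \<noteq> 0" "a = smult \<alpha> (prod \<phi> A)"
  using assms
proof (induction S arbitrary: a thesis rule: finite_induct)
  case empty
  then have "is_unit a" by simp
  then obtain c where c: "a = [:c:]" "c \<noteq> 0" by (metis is_unit_poly_iff dvd_0_left_iff one_neq_zero)
  show ?case by (rule empty.prems(1)[of "{}" c]) (use c in auto)
next
  case (insert s S)
  have ps: "prime_elem (\<phi> s)" and nz: "\<phi> s \<noteq> 0" using insert.prems(2) by auto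
  have dvd: "a dvd \<phi> s * prod \<phi> S" using insert.prems(3) insert.hyps by simp
  have primes: "\<forall>i\<in>S. prime_elem (\<phi> i)" using insert.prems(2) by simp
  show ?case
  proof (cases "\<phi> s dvd a")
    case True
    then obtain a' where a': "a = \<phi> s * a'" by (auto elim: dvdE)
    then have "a' dvd prod \<phi> S" using dvd nz by simp
    then obtain A \<alpha> where A: "A \<subseteq> S" "\<alpha> \<noteq> 0" "a' = smult \<alpha> (prod \<phi> A)"
      using insert.IH[OF _ primes] by blast
    then have "a = smult \<alpha> (prod \<phi> (insert s A))"
      using a' insert.hyps finite_subset by (subst prod.insert) (auto simp: mult_smult_right)
    then show ?thesis using insert.prems(1) A by blast
  next
    case False
    obtain r where r: "\<phi> s * prod \<phi> S = a * r" using dvd by (auto elim: dvdE)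
    then have "\<phi> s dvd r" using False prime_elem_dvd_mult_iff[OF ps] by (metis dvd_triv_left)
    then obtain r' where "r = \<phi> s * r'" by (auto elim: dvdE)
    with r have "\<phi> s * prod \<phi> S = \<phi> s * (a * r')" by (simp add: ac_simps)
    then have "a dvd prod \<phi> S" using nz by simp
    then obtain A \<alpha> where "A \<subseteq> S" "\<alpha> \<noteq> 0" "a = smult \<alpha> (prod \<phi> A)"
      using insert.IH[OF _ primes] by blast
    then show ?thesis using insert.prems(1) by blast
  qed
qed

lemma cofactor_of_smult_subprod:
  fixes \<phi> :: "'i \<Rightarrow> 'k::field poly"
  assumes "finite S" "A \<subseteq> S" "prod \<phi> A \<noteq> 0" "\<alpha> \<noteq> 0"
    and "smult \<alpha> (prod \<phi> A) * y = smult \<kappa> (prod \<phi> S)"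
  shows "y = smult (\<kappa> / \<alpha>) (prod \<phi> (S - A))"
proof -
  have "prod \<phi> A * smult \<alpha> y = smult \<alpha> (prod \<phi> A) * y" by simp
  also have "\<dots> = smult \<kappa> (prod \<phi> S)" by (rule assms(5))
  also have "\<dots> = prod \<phi> A * smult \<kappa> (prod \<phi> (S - A))"
    by (subst prod.subset_diff[OF assms(2,1)]) (simp add: mult.commute)
  finally have "smult \<alpha> y = smult \<kappa> (prod \<phi> (S - A))" using assms(3) mult_left_cancel by blast
  then have "smult (inverse \<alpha>) (smult \<alpha> y) = smult (inverse \<alpha>) (smult \<kappa> (prod \<phi> (S - A)))" by simp
  then show ?thesis using assms(4) by (simp add: field_simps)
qed

lemma UN_lessThan_Suc_case_nat: "(\<Union>k<Suc n. case_nat A B k) = A \<union> (\<Union>k<n. B k)"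
  by (simp add: lessThan_Suc_eq_insert_0 UN_insert image_Suc_lessThan[symmetric] del: image_Suc_lessThan)

lemma factors_of_smult_prod_prime_elems:
  fixes \<phi> :: "'i \<Rightarrow> 'k::field poly"
  assumes "finite S" "\<forall>i\<in>S. prime_elem (\<phi> i)" "prod_list xs = smult \<kappa> (prod \<phi> S)" "\<kappa> \<noteq> 0"
  shows "\<exists>A \<gamma>. (\<forall>k<length xs. A k \<subseteq> S \<and> \<gamma> k \<noteq> 0 \<and> xs ! k = smult (\<gamma> k) (prod \<phi> (A k))) \<and>
           (\<forall>k<length xs. \<forall>l<length xs. k \<noteq> l \<longrightarrow> A k \<inter> A l = {}) \<and> (\<Union>k<length xs. A k) = S"
  using assms
proof (induction xs arbitrary: S \<kappa>)
  case Nil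
  then have "degree (prod \<phi> S) = 0" by (metis degree_1 degree_smult_eq prod_list.Nil)
  then have "S = {}" using degree_prod_prime_elems_pos[OF Nil(1) _ Nil(2)] by auto
  then show ?case by simp
next
  case (Cons x xs)
  have "x dvd prod \<phi> S" using Cons(4,5) dvd_smult_cancel by (metis dvd_triv_left prod_list.Cons)
  then obtain A0 \<alpha> where A0: "A0 \<subseteq> S" "\<alpha> \<noteq> 0" "x = smult \<alpha> (prod \<phi> A0)"
    using dvd_prod_prime_elems[OF Cons(2,3)] by blast
  have "\<forall>i\<in>S. \<phi> i \<noteq> 0" using Cons(3) by auto
  then have "prod \<phi> A0 \<noteq> 0" using A0(1) Cons(2) by (auto simp: prod_zero_iff finite_subset)
  then have "prod_list xs = smult (\<kappa> / \<alpha>) (prod \<phi> (S - A0))"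
    using cofactor_of_smult_subprod[OF Cons(2) A0(1) _ A0(2)] Cons(4) A0(3) by simp
  then obtain A \<gamma> where IH: "\<forall>k<length xs. A k \<subseteq> S - A0 \<and> \<gamma> k \<noteq> 0 \<and> xs ! k = smult (\<gamma> k) (prod \<phi> (A k))"
    "\<forall>k<length xs. \<forall>l<length xs. k \<noteq> l \<longrightarrow> A k \<inter> A l = {}" "(\<Union>k<length xs. A k) = S - A0"
    using Cons.IH[of "S - A0" "\<kappa> / \<alpha>"] Cons(2,3,5) A0(2) by auto
  define B where "B = case_nat A0 A"
  have "\<forall>k<length (x # xs). B k \<subseteq> S \<and> case_nat \<alpha> \<gamma> k \<noteq> 0 \<and>
      (x # xs) ! k = smult (case_nat \<alpha> \<gamma> k) (prod \<phi> (B k))"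
  proof (intro allI impI)
    fix k assume "k < length (x # xs)"
    then show "B k \<subseteq> S \<and> case_nat \<alpha> \<gamma> k \<noteq> 0 \<and> (x # xs) ! k = smult (case_nat \<alpha> \<gamma> k) (prod \<phi> (B k))"
      using A0 IH(1) unfolding B_def by (cases k) auto
  qed
  moreover have "\<forall>k<length (x # xs). \<forall>l<length (x # xs). k \<noteq> l \<longrightarrow> B k \<inter> B l = {}"
  proof (intro allI impI)
    fix k l assume "k < length (x # xs)" "l < length (x # xs)" "k \<noteq> l"
    then show "B k \<inter> B l = {}"
      using IH(1,2) unfolding B_def by (cases k; cases l) fastforce+
  qed
  moreover have "(\<Union>k<length (x # xs). B k) = S"
  proof -
    have "(\<Union>k<length (x # xs). B k) = A0 \<union> (\<Union>k<length xs. A k)"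
      unfolding B_def by (simp add: UN_lessThan_Suc_case_nat)
    then show ?thesis using IH(3) A0(1) by auto
  qed
  ultimately show ?case by blast
qed

section \<open>Reordering the factors of a product\<close>

definition other_indices :: "nat \<Rightarrow> nat \<Rightarrow> nat list" where
  "other_indices k n = [0..<k] @ [Suc k..<n]"

lemma set_other_indices: "k < n \<Longrightarrow> set (other_indices k n) = {..<n} - {k}"
  unfolding other_indices_def by auto

lemma distinct_other_indices: "distinct (other_indices k n)"
  unfolding other_indices_def by auto

lemma ess_same_move_to_front:
  assumes k0: "k0 < length xs"
    and front: "\<exists>u. IntD_unit u \<and> xs ! k0 = u * y"
    and others: "\<forall>k<length xs. k \<noteq> k0 \<longrightarrow> (\<exists>u. IntD_unit u \<and> xs ! k = u * g k)"
  shows "ess_same xs (y # map g (other_indices k0 (length xs)))"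
proof -
  let ?n = "length xs"
  let ?ys = "y # map g (other_indices k0 ?n)"
  define \<sigma> where "\<sigma> k = (if k = k0 then 0 else if k < k0 then Suc k else k)" for k
  have "\<sigma> permutes {..<?n}"
  proof (rule bij_imp_permutes)
    show "bij_betw \<sigma> {..<?n} {..<?n}" unfolding \<sigma>_def
      by (rule bij_betw_byWitness[where f' = "\<lambda>k. if k = 0 then k0 else if k \<le> k0 then k - 1 else k"])
        (use k0 in auto)
    show "\<sigma> x = x" if "x \<notin> {..<?n}" for x using that k0 unfolding \<sigma>_def by auto
  qed
  moreover have "\<exists>u. IntD_unit u \<and> xs ! k = u * ?ys ! \<sigma> k" if "k < ?n" for k
  proof (cases "k = k0")
    case True
    then show ?thesis using front unfolding \<sigma>_def by simp
  next
    case False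
    then have "?ys ! \<sigma> k = g k"
      using that unfolding \<sigma>_def other_indices_def by (auto simp: nth_append)
    then show ?thesis using others that False by simp
  qed
  moreover have "length ?ys = ?n" using k0 unfolding other_indices_def by simp
  ultimately show ?thesis unfolding ess_same_def by metis
qed

lemma other_indices_enumerate_singleton_blocks:
  assumes disj: "\<forall>k<n. \<forall>l<n. k \<noteq> l \<longrightarrow> A k \<inter> A l = {}"
    and cover: "(\<Union>k<n. A k) = I" and k0: "k0 < n"
    and single: "\<forall>k<n. k \<noteq> k0 \<longrightarrow> A k = {j k}"
  shows "distinct (map j (other_indices k0 n)) \<and> set (map j (other_indices k0 n)) = I - A k0"
proof
  have "inj_on j ({..<n} - {k0})"
  proof (rule inj_onI, rule ccontr)
    fix k l assume kl: "k \<in> {..<n} - {k0}" "l \<in> {..<n} - {k0}" "j k = j l" "k \<noteq> l"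
    then have "A k \<inter> A l = {}" using disj by blast
    moreover have "A k = {j k}" "A l = {j l}" using kl(1,2) single by auto
    ultimately show False using kl(3) by simp
  qed
  then show "distinct (map j (other_indices k0 n))"
    by (simp add: distinct_map distinct_other_indices set_other_indices[OF k0])
  show "set (map j (other_indices k0 n)) = I - A k0"
  proof
    show "set (map j (other_indices k0 n)) \<subseteq> I - A k0"
    proof
      fix i assume "i \<in> set (map j (other_indices k0 n))"
      then obtain k where k: "k < n" "k \<noteq> k0" "i = j k" by (auto simp: set_other_indices[OF k0])
      then have "i \<in> A k" "A k \<inter> A k0 = {}" using single disj k0 by auto
      then show "i \<in> I - A k0" using cover k(1) by blast
    qed
    show "I - A k0 \<subseteq> set (map j (other_indices k0 n))"
    proof
      fix i assume i: "i \<in> I - A k0"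
      then obtain k where "k < n" "i \<in> A k" using cover by blast
      moreover have "k \<noteq> k0" using i \<open>i \<in> A k\<close> by blast
      ultimately show "i \<in> set (map j (other_indices k0 n))"
        using single by (auto simp: set_other_indices[OF k0])
    qed
  qed
qed

section \<open>Indispensable families\<close>

locale indispensable_family =
  fixes c :: "'a::idom"
    and I :: "'i set"
    and f :: "'i \<Rightarrow> 'a poly"
    and Lam :: "'a set \<Rightarrow> 'i set"
    and i0 :: 'i
  assumes finite_I: "finite I"
    and irreducible_f: "\<forall>i\<in>I. irreducible (map_poly to_fract (f i))"
    and c_not_unit: "\<not> c dvd 1" and c_nonzero: "c \<noteq> 0"
    and fixed_divisor_I: "fixed_divisor (\<Prod>i\<in>I. f i) = principal_ideal c"
    and Lam_indispensable: "\<forall>P\<in>{P. maximal_ideal P \<and> c \<in> P}.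
                 Lam P \<subseteq> I \<and> (\<forall>k\<in>Lam P. indispensable P f I k)"
    and i0_common: "\<forall>P\<in>{P. maximal_ideal P \<and> c \<in> P}. i0 \<in> Lam P"
begin

abbreviation "primes_over_c \<equiv> {P. maximal_ideal P \<and> c \<in> P}"
definition Lambda :: "'i set" where "Lambda = (\<Union>P\<in>primes_over_c. Lam P)"
abbreviation "phi i \<equiv> map_poly to_fract (f i)"
abbreviation "Phi S \<equiv> map_poly to_fract (\<Prod>i\<in>S. f i)"
abbreviation "quot S \<equiv> smult (inverse (to_fract c)) (Phi S)"

lemma primes_over_c_nonempty: "\<exists>P. P \<in> primes_over_c"
proof -
  have "1 \<notin> principal_ideal c" using c_not_unit by (simp add: mem_principal_ideal_iff)
  then obtain P where "maximal_ideal P" "principal_ideal c \<subseteq> P"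
    using maximal_ideal_superset[OF is_ideal_principal_ideal] by blast
  then show ?thesis by (metis dvd_refl mem_Collect_eq mem_principal_ideal_iff subsetD)
qed

lemma Lambda_subset_I: "Lambda \<subseteq> I"
  using Lam_indispensable unfolding Lambda_def by blast

lemma i0_in_Lambda: "i0 \<in> Lambda"
  using primes_over_c_nonempty i0_common unfolding Lambda_def by blast

lemma i0_in_I: "i0 \<in> I"
  using i0_in_Lambda Lambda_subset_I by blast

lemma prod_value_notin_prime_over_c:
  assumes P: "P \<in> primes_over_c" and k: "k \<in> Lam P" and B: "B \<subseteq> I" "k \<notin> B"
  obtains z where "poly (\<Prod>i\<in>B. f i) z \<notin> P"
proof -
  have "indispensable P f I k" using Lam_indispensable P k by blast
  then obtain z where z: "\<forall>i\<in>I. i \<noteq> k \<longrightarrow> vP P (poly (f i) z) = 0"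
    unfolding indispensable_def by blast
  have "poly (f i) z \<notin> P" if "i \<in> B" for i
    using that B z not_mem_if_vP_eq_0 by (metis subsetD)
  then have "(\<Prod>i\<in>B. poly (f i) z) \<notin> P"
    using P B(1) finite_I by (intro prod_notin_maximal_ideal) (auto intro: finite_subset)
  then show thesis using that by (simp add: poly_prod)
qed

lemma c_in_fixed_divisor:
  assumes "B \<subseteq> I" shows "c \<in> fixed_divisor (\<Prod>i\<in>B. f i)"
proof -
  have "c \<in> fixed_divisor (\<Prod>i\<in>I. f i)" using fixed_divisor_I by (simp add: mem_principal_ideal_iff)
  then show ?thesis using fixed_divisor_antimono[OF prod_dvd_prod_subset[OF finite_I assms]] by blast
qed

text \<open>Every \<open>P \<supseteq> d(\<Prod>\<^sub>B f)\<close> contains \<open>c\<close>, and \<open>f\<^sub>i\<^sub>0\<close> is indispensable for \<open>P\<close>.\<close>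
lemma one_in_fixed_divisor:
  assumes B: "B \<subseteq> I" "i0 \<notin> B"
  shows "1 \<in> fixed_divisor (\<Prod>i\<in>B. f i)"
proof (rule ccontr)
  assume "1 \<notin> fixed_divisor (\<Prod>i\<in>B. f i)"
  then obtain P where P: "maximal_ideal P" "fixed_divisor (\<Prod>i\<in>B. f i) \<subseteq> P"
    using maximal_ideal_superset[OF is_ideal_fixed_divisor] by blast
  then have "P \<in> primes_over_c" using c_in_fixed_divisor[OF B(1)] by blast
  with B obtain z where "poly (\<Prod>i\<in>B. f i) z \<notin> P"
    using i0_common prod_value_notin_prime_over_c by blast
  then show False using P(2) poly_in_fixed_divisor by blast
qed

lemma Lambda_subset_if_c_dvd:
  assumes A: "A \<subseteq> I" and dvd: "\<forall>z. c dvd poly (\<Prod>i\<in>A. f i) z"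
  shows "Lambda \<subseteq> A"
proof
  fix i assume "i \<in> Lambda"
  then obtain P where P: "P \<in> primes_over_c" "i \<in> Lam P" unfolding Lambda_def by blast
  show "i \<in> A"
  proof (rule ccontr)
    assume "i \<notin> A"
    then obtain z where "poly (\<Prod>i\<in>A. f i) z \<notin> P"
      using prod_value_notin_prime_over_c[OF P A] by blast
    moreover obtain r where "poly (\<Prod>i\<in>A. f i) z = r * c"
      using dvd by (metis dvdE mult.commute)
    moreover have "r * c \<in> P" using P(1) by (auto intro: ideal_mult_closed maximal_ideal_is_ideal)
    ultimately show False by simp
  qed
qed

lemma phi_prime_elem: "i \<in> I \<Longrightarrow> prime_elem (phi i)"
  using irreducible_f field_poly_irreducible_imp_prime by blast

lemma Phi_eq_prod: "Phi S = prod phi S"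
  by (rule fract_poly_prod)

lemma Phi_nonzero:
  assumes "S \<subseteq> I" shows "Phi S \<noteq> 0"
proof -
  have "phi i \<noteq> 0" if "i \<in> S" for i
    using that assms phi_prime_elem not_prime_elem_zero by (metis subsetD)
  then show ?thesis using assms finite_I by (auto simp: Phi_eq_prod prod_zero_iff finite_subset)
qed

lemma not_IntD_unit_smult_Phi:
  assumes "S \<subseteq> I" "S \<noteq> {}" "\<kappa> \<noteq> 0"
  shows "\<not> IntD_unit (smult \<kappa> (Phi S))"
proof -
  have "0 < degree (prod phi S)"
    using assms finite_I phi_prime_elem by (intro degree_prod_prime_elems_pos) (auto intro: finite_subset)
  then show ?thesis using degree_IntD_unit assms(3) by (fastforce simp: Phi_eq_prod)
qed

lemma cofactor_of_smult_Phi: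
  assumes "S \<subseteq> I" "X \<subseteq> S" "\<alpha> \<noteq> 0" "smult \<alpha> (Phi X) * y = smult \<kappa> (Phi S)"
  shows "y = smult (\<kappa> / \<alpha>) (Phi (S - X))"
  using assms Phi_nonzero finite_I unfolding Phi_eq_prod
  by (intro cofactor_of_smult_subprod) (auto intro: finite_subset)

lemma quot_in_IntD: "fixed_divisor (\<Prod>i\<in>S. f i) = principal_ideal c \<Longrightarrow> quot S \<in> IntD"
  using smult_inverse_fract_poly_in_IntD_iff[OF c_nonzero] fixed_divisor_subset_principal_ideal_iff
  by blast

text \<open>Since \<open>i\<^sub>0 \<notin> B\<close>, \<open>d(\<Prod>\<^sub>B f) = D\<close>, which forces \<open>\<beta> \<in> D\<close>; the other factor then has
  the form \<open>\<Prod>\<^sub>S\<^sub>-\<^sub>B f / (c e)\<close>, and \<open>c \<in> d(\<Prod>\<^sub>S\<^sub>-\<^sub>B f)\<close> makes \<open>e\<close> a unit.\<close>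
lemma factor_of_quot:
  assumes S: "S \<subseteq> I" and B: "B \<subseteq> S" "i0 \<notin> B"
    and a: "a \<in> IntD" and b: "b \<in> IntD"
    and ab: "a * b = quot S" and b_eq: "b = smult \<beta> (Phi B)"
  obtains e where "e dvd 1" "\<beta> = to_fract e"
    "a = smult (inverse (to_fract (c * e))) (Phi (S - B))"
    "fixed_divisor (\<Prod>i\<in>S - B. f i) = principal_ideal c" "Lambda \<subseteq> S - B"
proof -
  have BI: "B \<subseteq> I" and SBI: "S - B \<subseteq> I" using S B by auto
  obtain e where e: "\<beta> = to_fract e"
    using scalar_in_D_if_smult_in_IntD b b_eq one_in_fixed_divisor[OF BI B(2)] by blast
  have "b \<noteq> 0" using ab Phi_nonzero[OF S] c_nonzero by auto
  then have "e \<noteq> 0" using b_eq e by auto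
  then have ce: "c * e \<noteq> 0" using c_nonzero by simp
  have "a = smult (inverse (to_fract c) / \<beta>) (Phi (S - B))"
    using ab b_eq \<open>e \<noteq> 0\<close> e by (intro cofactor_of_smult_Phi[OF S B(1)]) (auto simp: mult.commute)
  then have a_eq: "a = smult (inverse (to_fract (c * e))) (Phi (S - B))"
    by (simp add: e divide_inverse inverse_mult_distrib)
  then have dvd: "\<forall>z. c * e dvd poly (\<Prod>i\<in>S - B. f i) z"
    using a smult_inverse_fract_poly_in_IntD_iff[OF ce] by simp
  then have "c \<in> principal_ideal (c * e)"
    using c_in_fixed_divisor[OF SBI] fixed_divisor_subset_principal_ideal_iff by blast
  then have unit: "e dvd 1" using c_nonzero by (simp add: mem_principal_ideal_iff)
  have c_dvd: "\<forall>z. c dvd poly (\<Prod>i\<in>S - B. f i) z" using dvd dvd_mult_left by blast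
  then have "fixed_divisor (\<Prod>i\<in>S - B. f i) = principal_ideal c"
    using fixed_divisor_subset_principal_ideal_iff
      principal_ideal_subset[OF is_ideal_fixed_divisor c_in_fixed_divisor[OF SBI]] by blast
  with that unit e a_eq Lambda_subset_if_c_dvd[OF SBI c_dvd] show thesis by blast
qed

lemma minimal_quot_cofactor_unit:
  assumes S: "Lambda \<union> J1 \<subseteq> I"
    and minimal: "\<forall>J'. J' \<subset> J1 \<longrightarrow> fixed_divisor (\<Prod>i\<in>Lambda \<union> J'. f i) \<noteq> principal_ideal c"
    and X: "X \<subseteq> Lambda \<union> J1" "i0 \<in> X" and x: "x \<in> IntD" and y: "y \<in> IntD"
    and xy: "x * y = quot (Lambda \<union> J1)" and y_eq: "y = smult \<eta> (Phi (Lambda \<union> J1 - X))"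
  shows "IntD_unit y"
proof -
  have SX: "Lambda \<union> J1 - (Lambda \<union> J1 - X) = X" using X(1) by blast
  have "i0 \<notin> Lambda \<union> J1 - X" using X(2) by blast
  from factor_of_quot[OF S Diff_subset this x y xy y_eq, unfolded SX] obtain e
    where e: "e dvd 1" "\<eta> = to_fract e" "fixed_divisor (\<Prod>i\<in>X. f i) = principal_ideal c" "Lambda \<subseteq> X" .
  have LX: "Lambda \<union> (X \<inter> J1) = X" using X(1) e(4) by blast
  have "\<not> X \<inter> J1 \<subset> J1"
  proof
    assume "X \<inter> J1 \<subset> J1"
    then have "fixed_divisor (\<Prod>i\<in>Lambda \<union> (X \<inter> J1). f i) \<noteq> principal_ideal c" using minimal by blast
    then show False using e(3) by (simp add: LX)
  qed
  then have "Lambda \<union> J1 - X = {}" using e(4) by blast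
  then have "y = smult (to_fract e) (Phi {})" using y_eq e(2) by (simp only:)
  then show ?thesis using IntD_unit_const[OF e(1)] by simp
qed

lemma minimal_quot_irreducible:
  assumes S: "Lambda \<union> J1 \<subseteq> I"
    and fd: "fixed_divisor (\<Prod>i\<in>Lambda \<union> J1. f i) = principal_ideal c"
    and minimal: "\<forall>J'. J' \<subset> J1 \<longrightarrow> fixed_divisor (\<Prod>i\<in>Lambda \<union> J'. f i) \<noteq> principal_ideal c"
  shows "IntD_irreducible (quot (Lambda \<union> J1))"
  unfolding IntD_irreducible_def
proof (intro conjI ballI impI)
  let ?S = "Lambda \<union> J1"
  show "quot ?S \<in> IntD" using fd by (rule quot_in_IntD)
  show "quot ?S \<noteq> 0" using Phi_nonzero[OF S] c_nonzero by simp
  have "?S \<noteq> {}" using i0_in_Lambda by blast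
  then show "\<not> IntD_unit (quot ?S)" using not_IntD_unit_smult_Phi[OF S] c_nonzero by simp
  fix a b assume a: "a \<in> IntD" and b: "b \<in> IntD" and ab: "quot ?S = a * b"
  have "a dvd smult (inverse (to_fract c)) (prod phi ?S)" using ab by (simp add: Phi_eq_prod)
  then have dvd: "a dvd prod phi ?S" by (rule dvd_smult_cancel) (simp add: c_nonzero)
  have fin: "finite ?S" and primes: "\<forall>i\<in>?S. prime_elem (phi i)"
    using S finite_I phi_prime_elem by (auto intro: finite_subset)
  obtain A \<alpha> where A: "A \<subseteq> ?S" "\<alpha> \<noteq> 0" "a = smult \<alpha> (prod phi A)"
    using dvd_prod_prime_elems[OF fin primes dvd] by blast
  then have a_eq: "a = smult \<alpha> (Phi A)" by (simp add: Phi_eq_prod)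
  have b_eq: "b = smult (inverse (to_fract c) / \<alpha>) (Phi (?S - A))"
    using ab a_eq by (intro cofactor_of_smult_Phi[OF S A(1) A(2)]) simp
  show "IntD_unit a \<or> IntD_unit b"
  proof (cases "i0 \<in> A")
    case True
    then show ?thesis using minimal_quot_cofactor_unit[OF S minimal A(1) True a b ab[symmetric] b_eq] by blast
  next
    case False
    then have "i0 \<in> ?S - A" using i0_in_Lambda by blast
    moreover have "b * a = quot ?S" using ab by (simp add: mult.commute)
    moreover have "a = smult \<alpha> (Phi (?S - (?S - A)))" using a_eq A(1) by (simp add: double_diff)
    ultimately have "IntD_unit a" using minimal_quot_cofactor_unit[OF S minimal Diff_subset _ b a] by blast
    then show ?thesis by blast
  qed
qed

lemma IntD_unit_if_unit_factor_of_phi: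
  assumes j: "j \<in> I" "j \<notin> Lambda" and a: "a \<in> IntD" and b: "b \<in> IntD"
    and ab: "phi j = a * b" and unit: "is_unit a"
  shows "IntD_unit a"
proof -
  obtain \<alpha> where \<alpha>: "a = [:\<alpha>:]" "\<alpha> \<noteq> 0"
    using unit by (metis is_unit_poly_iff dvd_0_left_iff one_neq_zero)
  obtain d where d: "\<alpha> = to_fract d" using a unfolding IntD_def \<alpha>(1) by auto
  with \<alpha>(2) have "d \<noteq> 0" by auto
  have "b = smult (inverse (to_fract d)) (phi j)" using ab \<alpha> d by simp
  then have "\<forall>z. d dvd poly (f j) z"
    using b smult_inverse_fract_poly_in_IntD_iff[OF \<open>d \<noteq> 0\<close>] by simp
  moreover have "1 \<in> fixed_divisor (f j)"
    using one_in_fixed_divisor[of "{j}"] j i0_in_Lambda by auto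
  ultimately have "d dvd 1"
    using fixed_divisor_subset_principal_ideal_iff mem_principal_ideal_iff by blast
  then show ?thesis using IntD_unit_const \<alpha>(1) d by simp
qed

lemma phi_IntD_irreducible:
  assumes j: "j \<in> I" "j \<notin> Lambda"
  shows "IntD_irreducible (phi j)"
  unfolding IntD_irreducible_def
proof (intro conjI ballI impI)
  show "phi j \<in> IntD" by (rule fract_poly_in_IntD)
  show "phi j \<noteq> 0" using Phi_nonzero[of "{j}"] j by simp
  show "\<not> IntD_unit (phi j)" using not_IntD_unit_smult_Phi[of "{j}" 1] j by simp
  fix a b assume a: "a \<in> IntD" and b: "b \<in> IntD" and ab: "phi j = a * b"
  have "is_unit a \<or> is_unit b" using irreducible_f j(1) ab irreducibleD by blast
  moreover have "phi j = b * a" using ab by (simp add: mult.commute)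
  ultimately show "IntD_unit a \<or> IntD_unit b"
    using IntD_unit_if_unit_factor_of_phi[OF j a b ab] IntD_unit_if_unit_factor_of_phi[OF j b a] by blast
qed

lemma candidate_factorization:
  assumes "candidate_split c f I Lambda J1 J2 js"
  shows "IntD_factorization (quot I) (candidate_expr c f Lambda J1 js)"
proof -
  have S: "Lambda \<union> J1 \<subseteq> I" and J2: "J2 \<subseteq> I" "I - J2 = Lambda \<union> J1" "J2 \<inter> Lambda = {}"
    and fd: "fixed_divisor (\<Prod>i\<in>Lambda \<union> J1. f i) = principal_ideal c"
    and minimal: "\<forall>J'. J' \<subset> J1 \<longrightarrow> fixed_divisor (\<Prod>i\<in>Lambda \<union> J'. f i) \<noteq> principal_ideal c"
    and js: "distinct js" "set js = J2"
    using assms unfolding candidate_split_def by auto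
  have "Phi I = Phi (I - J2) * Phi J2" by (simp add: prod.subset_diff[OF J2(1) finite_I])
  also have "Phi J2 = prod_list (map phi js)"
    using prod.distinct_set_conv_list[OF js(1), of phi] js(2) Phi_eq_prod by simp
  finally have "prod_list (candidate_expr c f Lambda J1 js) = quot I"
    unfolding candidate_expr_def J2(2) by (simp add: mult_smult_left)
  moreover have "\<forall>j\<in>set js. IntD_irreducible (phi j)" using phi_IntD_irreducible js J2 by blast
  ultimately show ?thesis using minimal_quot_irreducible[OF S fd minimal]
    unfolding IntD_factorization_def candidate_expr_def by auto
qed

lemma factorization_blocks:
  assumes "IntD_factorization (quot I) xs"
  obtains A \<gamma> where "\<forall>k<length xs. A k \<subseteq> I \<and> \<gamma> k \<noteq> 0 \<and> xs ! k = smult (\<gamma> k) (Phi (A k))"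
    "\<forall>k<length xs. \<forall>l<length xs. k \<noteq> l \<longrightarrow> A k \<inter> A l = {}" "(\<Union>k<length xs. A k) = I"
proof -
  have prod: "prod_list xs = smult (inverse (to_fract c)) (prod phi I)"
    using assms unfolding IntD_factorization_def by (simp add: Phi_eq_prod)
  have primes: "\<forall>i\<in>I. prime_elem (phi i)" using phi_prime_elem by blast
  have "inverse (to_fract c) \<noteq> 0" using c_nonzero by simp
  from factors_of_smult_prod_prime_elems[OF finite_I primes prod this]
  show thesis using that unfolding Phi_eq_prod by blast
qed

lemma distinguished_factor:
  assumes x: "x \<in> IntD" and r: "r \<in> IntD" and rx: "r * x = quot I"
    and X: "X \<subseteq> I" "i0 \<in> X" and x_eq: "x = smult \<gamma> (Phi X)" "\<gamma> \<noteq> 0"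
  obtains e where "e dvd 1" "x = smult (inverse (to_fract (c * e))) (Phi X)"
    "fixed_divisor (\<Prod>i\<in>X. f i) = principal_ideal c" "Lambda \<subseteq> X"
proof -
  have r_eq: "r = smult (inverse (to_fract c) / \<gamma>) (Phi (I - X))"
    using rx x_eq by (intro cofactor_of_smult_Phi[OF subset_refl X(1)]) (simp_all add: mult.commute)
  have i0: "i0 \<notin> I - X" using X(2) by blast
  have IX: "I - (I - X) = X" using X(1) by blast
  have xr: "x * r = quot I" using rx by (simp add: mult.commute)
  from factor_of_quot[OF subset_refl Diff_subset i0 x r xr r_eq, unfolded IX]
  obtain e where "e dvd 1" "inverse (to_fract c) / \<gamma> = to_fract e"
    "x = smult (inverse (to_fract (c * e))) (Phi X)"
    "fixed_divisor (\<Prod>i\<in>X. f i) = principal_ideal c" "Lambda \<subseteq> X" .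
  then show thesis using that by blast
qed

lemma other_factor_is_unit_multiple_of_phi:
  assumes irr: "IntD_irreducible x" and r: "r \<in> IntD" and rx: "r * x = quot I"
    and B: "B \<subseteq> I" "i0 \<notin> B" and x_eq: "x = smult \<gamma> (Phi B)"
  obtains j e where "B = {j}" "e dvd 1" "x = [:to_fract e:] * phi j"
proof -
  have x: "x \<in> IntD" and nonunit: "\<not> IntD_unit x"
    and split: "\<forall>a\<in>IntD. \<forall>b\<in>IntD. x = a * b \<longrightarrow> IntD_unit a \<or> IntD_unit b"
    using irr unfolding IntD_irreducible_def by auto
  from factor_of_quot[OF subset_refl B r x rx x_eq] obtain e where e: "e dvd 1" "\<gamma> = to_fract e"
    "r = smult (inverse (to_fract (c * e))) (Phi (I - B))"
    "fixed_divisor (\<Prod>i\<in>I - B. f i) = principal_ideal c" "Lambda \<subseteq> I - B" .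
  have "e \<noteq> 0" using e(1) by auto
  have "B \<noteq> {}"
  proof
    assume "B = {}"
    then show False using nonunit x_eq e(2) IntD_unit_const[OF e(1)] by simp
  qed
  then obtain j where j: "j \<in> B" by blast
  have "B = {j}"
  proof (rule ccontr)
    assume "B \<noteq> {j}"
    then have rest: "B - {j} \<noteq> {}" "B - {j} \<subseteq> I" using j B(1) by auto
    have "x = smult (to_fract e) (phi j) * Phi (B - {j})"
      using x_eq e(2) prod.remove[OF finite_subset[OF B(1) finite_I] j, of f] by (simp add: mult_smult_left)
    moreover have "smult (to_fract e) (phi j) \<in> IntD" "Phi (B - {j}) \<in> IntD"
      using fract_poly_in_IntD[of "smult e (f j)"] fract_poly_in_IntD by simp_all
    moreover have "\<not> IntD_unit (smult (to_fract e) (phi j))"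
      using not_IntD_unit_smult_Phi[of "{j}" "to_fract e"] j B(1) \<open>e \<noteq> 0\<close> by auto
    moreover have "\<not> IntD_unit (Phi (B - {j}))"
      using not_IntD_unit_smult_Phi[OF rest(2,1), of 1] by simp
    ultimately show False using split by blast
  qed
  then show thesis using that e x_eq by simp
qed

lemma distinguished_factor_minimal:
  assumes irr: "IntD_irreducible x" and X: "X \<subseteq> I" "Lambda \<subseteq> X" and e: "e dvd 1"
    and x_eq: "x = smult (inverse (to_fract (c * e))) (Phi X)"
  shows "\<forall>J'. J' \<subset> X - Lambda \<longrightarrow> fixed_divisor (\<Prod>i\<in>Lambda \<union> J'. f i) \<noteq> principal_ideal c"
proof (intro allI impI notI)
  fix J' assume J': "J' \<subset> X - Lambda" and fd: "fixed_divisor (\<Prod>i\<in>Lambda \<union> J'. f i) = principal_ideal c"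
  let ?B1 = "Lambda \<union> J'" and ?B2 = "X - Lambda - J'"
  have B: "?B2 \<subseteq> X" "X - ?B2 = ?B1" "?B1 \<subseteq> I" "?B2 \<subseteq> I" "?B1 \<noteq> {}" "?B2 \<noteq> {}"
    using J' X i0_in_Lambda by auto
  have "Phi X = Phi ?B1 * Phi ?B2"
    using prod.subset_diff[OF B(1) finite_subset[OF X(1) finite_I], of f] B(2) by simp
  then have x_split: "x = smult (inverse (to_fract (c * e))) (Phi ?B1) * Phi ?B2"
    using x_eq by (simp add: mult_smult_left)
  obtain u where u: "IntD_unit u" and ueq: "smult (inverse (to_fract (c * e))) (Phi ?B1) = u * quot ?B1"
    using smult_inverse_mult_unit[OF e] by blast
  have in1: "smult (inverse (to_fract (c * e))) (Phi ?B1) \<in> IntD"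
    unfolding ueq using u quot_in_IntD[OF fd] by (intro IntD_mult_closed) (auto simp: IntD_unit_def)
  have "c * e \<noteq> 0" using e c_nonzero by auto
  then have nonunit1: "\<not> IntD_unit (smult (inverse (to_fract (c * e))) (Phi ?B1))"
    using not_IntD_unit_smult_Phi[OF B(3,5)] by simp
  have nonunit2: "\<not> IntD_unit (Phi ?B2)" using not_IntD_unit_smult_Phi[OF B(4,6), of 1] by simp
  have "\<forall>a\<in>IntD. \<forall>b\<in>IntD. x = a * b \<longrightarrow> IntD_unit a \<or> IntD_unit b"
    using irr unfolding IntD_irreducible_def by blast
  from this[rule_format, OF in1 fract_poly_in_IntD x_split] show False
    using nonunit1 nonunit2 by blast
qed

lemma factorization_shape:
  assumes fac: "IntD_factorization (quot I) xs"
  obtains A k0 j u e where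
    "\<forall>k<length xs. \<forall>l<length xs. k \<noteq> l \<longrightarrow> A k \<inter> A l = {}" "(\<Union>k<length xs. A k) = I"
    "k0 < length xs" "A k0 \<subseteq> I" "Lambda \<subseteq> A k0" "e dvd 1"
    "xs ! k0 = smult (inverse (to_fract (c * e))) (Phi (A k0))"
    "fixed_divisor (\<Prod>i\<in>A k0. f i) = principal_ideal c"
    "\<forall>k<length xs. k \<noteq> k0 \<longrightarrow> A k = {j k} \<and> u k dvd 1 \<and> xs ! k = [:to_fract (u k):] * phi (j k)"
proof -
  let ?n = "length xs"
  have irr: "IntD_irreducible (xs ! k)" if "k < ?n" for k
    using fac that unfolding IntD_factorization_def by auto
  have cofactor: "\<exists>r\<in>IntD. r * xs ! k = quot I" if "k < ?n" for k
    using IntD_cofactor_in_prod_list[OF that] fac unfolding IntD_factorization_def IntD_irreducible_def by auto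
  obtain A \<gamma> where A: "\<forall>k<?n. A k \<subseteq> I \<and> \<gamma> k \<noteq> 0 \<and> xs ! k = smult (\<gamma> k) (Phi (A k))"
    and disj: "\<forall>k<?n. \<forall>l<?n. k \<noteq> l \<longrightarrow> A k \<inter> A l = {}" and cover: "(\<Union>k<?n. A k) = I"
    using factorization_blocks[OF fac] by blast
  obtain k0 where k0: "k0 < ?n" "i0 \<in> A k0" using cover i0_in_I by blast
  have "\<exists>j u. A k = {j} \<and> u dvd 1 \<and> xs ! k = [:to_fract u:] * phi j" if k: "k < ?n" "k \<noteq> k0" for k
  proof -
    obtain r where "r \<in> IntD" "r * xs ! k = quot I" using cofactor[OF k(1)] by blast
    moreover have "i0 \<notin> A k" using disj k0 k by blast
    ultimately show ?thesis
      using other_factor_is_unit_multiple_of_phi[OF irr[OF k(1)]] A k(1) by metis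
  qed
  then obtain j u where ju: "\<forall>k<?n. k \<noteq> k0 \<longrightarrow> A k = {j k} \<and> u k dvd 1 \<and> xs ! k = [:to_fract (u k):] * phi (j k)"
    by metis
  obtain r0 where r0: "r0 \<in> IntD" "r0 * xs ! k0 = quot I" using cofactor[OF k0(1)] by blast
  have Ak0: "A k0 \<subseteq> I" and x0: "xs ! k0 = smult (\<gamma> k0) (Phi (A k0))" "\<gamma> k0 \<noteq> 0"
    using A k0(1) by auto
  have "xs ! k0 \<in> IntD" using irr[OF k0(1)] unfolding IntD_irreducible_def by blast
  from distinguished_factor[OF this r0 Ak0 k0(2) x0] obtain e where "e dvd 1"
    "xs ! k0 = smult (inverse (to_fract (c * e))) (Phi (A k0))"
    "fixed_divisor (\<Prod>i\<in>A k0. f i) = principal_ideal c" "Lambda \<subseteq> A k0" .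
  then show thesis using that[OF disj cover k0(1) Ak0 _ _ _ _ ju] by blast
qed

lemma factorization_ess_same_candidate:
  assumes fac: "IntD_factorization (quot I) xs"
  shows "\<exists>J1 J2 js. candidate_split c f I Lambda J1 J2 js \<and> ess_same xs (candidate_expr c f Lambda J1 js)"
proof -
  let ?n = "length xs"
  obtain A k0 j u e where disj: "\<forall>k<?n. \<forall>l<?n. k \<noteq> l \<longrightarrow> A k \<inter> A l = {}"
    and cover: "(\<Union>k<?n. A k) = I" and k0: "k0 < ?n" and Ak0: "A k0 \<subseteq> I" "Lambda \<subseteq> A k0"
    and e: "e dvd 1" "xs ! k0 = smult (inverse (to_fract (c * e))) (Phi (A k0))"
    and fd: "fixed_divisor (\<Prod>i\<in>A k0. f i) = principal_ideal c"
    and ju: "\<forall>k<?n. k \<noteq> k0 \<longrightarrow> A k = {j k} \<and> u k dvd 1 \<and> xs ! k = [:to_fract (u k):] * phi (j k)"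
    by (rule factorization_shape[OF fac])
  define J1 where "J1 = A k0 - Lambda"
  define js where "js = map j (other_indices k0 ?n)"
  have LJ1: "Lambda \<union> J1 = A k0" using Ak0(2) unfolding J1_def by blast
  have "distinct js" "set js = I - A k0"
    using other_indices_enumerate_singleton_blocks[OF disj cover k0] ju unfolding js_def by auto
  moreover have irr: "IntD_irreducible (xs ! k0)"
    using fac k0 unfolding IntD_factorization_def by auto
  then have "\<forall>J'. J' \<subset> J1 \<longrightarrow> fixed_divisor (\<Prod>i\<in>Lambda \<union> J'. f i) \<noteq> principal_ideal c"
    unfolding J1_def by (rule distinguished_factor_minimal[OF _ Ak0 e])
  ultimately have "candidate_split c f I Lambda J1 (I - A k0) js"
    unfolding candidate_split_def LJ1 using Ak0 fd unfolding J1_def by auto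
  moreover have "ess_same xs (candidate_expr c f Lambda J1 js)"
  proof -
    have "\<exists>v. IntD_unit v \<and> xs ! k0 = v * quot (A k0)"
      using smult_inverse_mult_unit[OF e(1)] e(2) by simp
    moreover have "\<forall>k<?n. k \<noteq> k0 \<longrightarrow> (\<exists>v. IntD_unit v \<and> xs ! k = v * phi (j k))"
      using ju IntD_unit_const by blast
    ultimately have "ess_same xs (quot (A k0) # map (\<lambda>k. phi (j k)) (other_indices k0 ?n))"
      by (rule ess_same_move_to_front[OF k0])
    then show ?thesis unfolding candidate_expr_def js_def LJ1 by (simp add: comp_def)
  qed
  ultimately show ?thesis by blast
qed

end

theorem lemma3p7:
  fixes c :: "'a::idom"
    and I :: "'i set"
    and f :: "'i \<Rightarrow> 'a poly"
    and Lam :: "'a set \<Rightarrow> 'i set"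
  assumes ded: "dedekind_domain TYPE('a)"
    and finI: "finite I" and neI: "I \<noteq> {}"
    and irr: "\<forall>i\<in>I. irreducible (map_poly to_fract (f i))"
    and c_nonunit: "\<not> c dvd 1" and c_nz: "c \<noteq> 0"
    and dfix: "fixed_divisor (\<Prod>i\<in>I. f i) = principal_ideal c"
    and LamP: "\<forall>P\<in>{P. maximal_ideal P \<and> c \<in> P}.
                 Lam P \<subseteq> I \<and> (\<forall>k\<in>Lam P. indispensable P f I k)"
    and inter: "(\<Inter>P\<in>{P. maximal_ideal P \<and> c \<in> P}. Lam P) \<noteq> {}"
  defines "Lambda \<equiv> (\<Union>P\<in>{P. maximal_ideal P \<and> c \<in> P}. Lam P)"
    and "F \<equiv> smult (inverse (to_fract c)) (map_poly to_fract (\<Prod>i\<in>I. f i))"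
  shows "(\<forall>J1 J2 js. candidate_split c f I Lambda J1 J2 js \<longrightarrow> IntD_factorization F (candidate_expr c f Lambda J1 js)) \<and>
         (\<forall>xs. IntD_factorization F xs \<longrightarrow>
            (\<exists>J1 J2 js. candidate_split c f I Lambda J1 J2 js \<and> ess_same xs (candidate_expr c f Lambda J1 js)))"
proof -
  obtain i0 where "\<forall>P\<in>{P. maximal_ideal P \<and> c \<in> P}. i0 \<in> Lam P" using inter by blast
  then interpret L: indispensable_family c I f Lam i0
    using finI irr c_nonunit c_nz dfix LamP by unfold_locales
  show ?thesis
    unfolding Lambda_def F_def L.Lambda_def[symmetric]
    using L.candidate_factorization L.factorization_ess_same_candidate by blast
qed

end
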